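(* Fix $n\ge 2$ and $i\in\{1,\dots,n\}$. Then for every integer $k\ge 1$: (1) $\partial[i]\,\lambda_n^{(k)}=(-1)^{i-1}\,k\,\lambda_{n-1}^{(k)}$; (2) for $1\le k\le n$, $\partial[i]\,e_n^{(k)}=(-1)^{i-1}\,e_{n-1}^{(k-1)}$, where $e_{n-1}^{(0)}:=0$ and $e_{n-1}^{(n)}:=0$ (in particular $\partial[i]e_n^{(1)}=0$). Here both sides are regarded as elements of the span of words on $\{1,\dots,n\}\setminus\{i\}$ via the identification described in the context.
   Context: Identify each permutation $\sigma\in S_r$ with the injective word $\sigma(1)\sigma(2)\cdots\sigma(r)$ on $\{1,\dots,r\}$ (one-line notation), so that elements of the group algebra $\mathbb{C}S_r$ are linear combinations of such words. A descent of a word $w_1\cdots w_m$ is an index $t$ with $w_t>w_{t+1}$. For $1\le k\le r$ let $S(r;k)$ be the set of permutations in $S_r$ with exactly $k-1$ descents, and define $l_r^{(k)}=(-1)^{k-1}\sum_{\sigma\in S(r;k)}\mathrm{sgn}(\sigma)\,\sigma$ (with $l_r^{(k)}=0$ if $S(r;k)$ is empty, e.g. $k>r$), and $\lambda_r^{(k)}=\sum_{t=0}^{k-1}(-1)^t\binom{r+t}{t}\,l_r^{(k-t)}$ for $k\ge1$. The Eulerian idempotents $e_r^{(1)},\dots,e_r^{(r)}\in\mathbb{C}S_r$ are the elements satisfying $(-1)^{k-1}\lambda_r^{(k)}=\sum_{j=1}^{r}k^j e_r^{(j)}$ for all integers $k\ge1$ (they are determined by the cases $k=1,\dots,r$ since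 the matrix $(k^j)$ is an invertible Vandermonde matrix). For an injective word $a_1\cdots a_m$ on $\{1,\dots,n\}$, the simplicial boundary is $\partial(a_1\cdots a_m)=\sum_{j=1}^m(-1)^{j-1}a_1\cdots a_{j-1}a_{j+1}\cdots a_m$, extended linearly. For $i\in\{1,\dots,n\}$, $\partial[i]$ denotes the part of $\partial$ that deletes the letter $i$: $\partial[i](a_1\cdots a_m)=(-1)^{j-1}a_1\cdots\widehat{a_j}\cdots a_m$ if $a_j=i$, and $0$ if $i$ does not occur. Words on $\{1,\dots,n\}\setminus\{i\}$ of length $n-1$ are identified with permutations in $S_{n-1}$ by replacing each letter $i+t$ ($t\ge1$) by $i+t-1$; via this identification $\lambda_{n-1}^{(k)}$ and $e_{n-1}^{(k)}$ are viewed as linear combinations of words on $\{1,\dots,n\}\setminus\{i\}$. *)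

theory Defs
  imports Complex_Main "HOL-Combinatorics.Permutations"
begin

text \<open>Elements of the span of injective words: functions from words (nat lists) to complex
  coefficients; the support is always finite for the objects considered here.\<close>
type_synonym lincomb = "nat list \<Rightarrow> complex"

text \<open>Permutations of S_r in one-line notation: injective words with letter set {1..r}.\<close>
definition perm_words :: "nat \<Rightarrow> nat list set" where
  "perm_words r = {w. distinct w \<and> set w = {1..r}}"

definition word_perm :: "nat list \<Rightarrow> nat \<Rightarrow> nat" where
  "word_perm w = (\<lambda>x. if x \<in> {1..length w} then w ! (x - 1) else x)"

definition word_sgn :: "nat list \<Rightarrow> int" where
  "word_sgn w = sign (word_perm w)"

definition descents :: "nat list \<Rightarrow> nat" where
  "descents w = card {t. Suc t < length w \<and> w ! t > w ! Suc t}"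

definition l_elt :: "nat \<Rightarrow> nat \<Rightarrow> lincomb" where
  "l_elt r k = (\<lambda>w. if w \<in> perm_words r \<and> descents w = k - 1 \<and> k \<ge> 1
                     then (-1) ^ (k - 1) * of_int (word_sgn w) else 0)"

definition lambda_elt :: "nat \<Rightarrow> nat \<Rightarrow> lincomb" where
  "lambda_elt r k = (\<lambda>w. \<Sum>t<k. (-1) ^ t * of_nat ((r + t) choose t) * l_elt r (k - t) w)"

text \<open>Eulerian idempotents e_r^(1..r), determined by the Vandermonde system for k = 1..r;
  extended by 0 outside {1..r} (so e_r^(0) = 0).\<close>
definition euler_idem :: "nat \<Rightarrow> nat \<Rightarrow> lincomb" where
  "euler_idem r = (THE e. (\<forall>j. j \<notin> {1..r} \<longrightarrow> e j = (\<lambda>_. 0)) \<and>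
      (\<forall>k\<in>{1..r}. \<forall>w. (-1) ^ (k - 1) * lambda_elt r k w
                        = (\<Sum>j=1..r. of_nat k ^ j * e j w)))"

text \<open>Partial boundary deleting the letter i: the coefficient of v in \<partial>[i] f is the sum over
  injective words w containing i with w minus i equal to v, of (-1)^(j-1) f(w), where j is the
  (1-based) position of i in w.\<close>
definition bd_letter :: "nat \<Rightarrow> lincomb \<Rightarrow> lincomb" where
  "bd_letter i f = (\<lambda>v. \<Sum>w\<in>{w. distinct w \<and> i \<in> set w \<and> remove1 i w = v}.
        (-1) ^ length (takeWhile (\<lambda>a. a \<noteq> i) w) * f w)"

definition shift_letter :: "nat \<Rightarrow> nat \<Rightarrow> nat" where
  "shift_letter i a = (if a > i then a - 1 else a)"

text \<open>View a combination of words on {1..n-1} as a combination of words on {1..n} minus {i}.\<close>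
definition relabel :: "nat \<Rightarrow> lincomb \<Rightarrow> lincomb" where
  "relabel i g = (\<lambda>v. if i \<notin> set v then g (map (shift_letter i) v) else 0)"

end

theory Submission
  imports Defs "HOL-Computational_Algebra.Polynomial"
begin

text \<open>
  For \<open>w \<in> S_r\<close> only one summand in the definition of \<open>\<lambda>_r^(k)\<close> survives, giving
  \<open>\<lambda>_r^(k)(w) = (-1)^(k-1) sgn(w) C(r+k-1-des w, r)\<close>. The words \<open>w\<close> with \<open>\<partial>[i] w = \<plusminus>v\<close>
  are the insertions of \<open>i\<close> into \<open>v\<close> at positions \<open>p = 0..n-1\<close>; after relabelling, such
  an insertion has sign \<open>(-1)^(p+i-1) sgn(v)\<close> and it raises the descent number by some
  \<open>e_p \<in> {0,1}\<close> with \<open>\<Sum>e_p = (n-1) - des v\<close>. Pascal's rule then collapses the alternating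
  sum to \<open>k C(n+k-2-des v, n-1)\<close>, which is (1).

  For (2), \<open>(-1)^(k-1) \<lambda>_r^(k)(w)\<close> is a polynomial in \<open>k\<close> of degree at most \<open>r\<close> without
  constant term, and the \<open>e_r^(j)(w)\<close> are its coefficients. By (1), applying \<open>\<partial>[i]\<close>
  coefficientwise to this polynomial for \<open>r = n\<close> gives \<open>(-1)^(i-1) x\<close> times the relabelled
  polynomial for \<open>r = n-1\<close>, as both sides have degree at most \<open>n\<close> and agree at
  \<open>x = 1..n+1\<close>. Comparing coefficients of \<open>x^k\<close> gives (2).
\<close>

definition insert_at :: "nat \<Rightarrow> 'a \<Rightarrow> 'a list \<Rightarrow> 'a list" where
  "insert_at p x xs = take p xs @ x # drop p xs"

lemma length_insert_at [simp]: "length (insert_at p x xs) = Suc (length xs)"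
  by (simp add: insert_at_def)

lemma set_take_Un_set_drop: "set (take p xs) \<union> set (drop p xs) = set xs"
  by (metis append_take_drop_id set_append)

lemma set_insert_at [simp]: "set (insert_at p x xs) = insert x (set xs)"
  using set_take_Un_set_drop[of p xs] by (auto simp: insert_at_def)

lemma distinct_insert_at [simp]: "distinct (insert_at p x xs) \<longleftrightarrow> distinct xs \<and> x \<notin> set xs"
proof -
  have "distinct (take p xs @ drop p xs) \<longleftrightarrow> distinct xs" by simp
  then show ?thesis
    using set_take_Un_set_drop[of p xs] unfolding insert_at_def distinct_append by auto
qed

lemma remove1_insert_at: "x \<notin> set xs \<Longrightarrow> remove1 x (insert_at p x xs) = xs"
  by (auto simp: insert_at_def remove1_append dest: in_set_takeD)

lemma takeWhile_insert_at:
  "x \<notin> set xs \<Longrightarrow> takeWhile (\<lambda>a. a \<noteq> x) (insert_at p x xs) = take p xs"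
proof -
  assume "x \<notin> set xs"
  then have "\<forall>a\<in>set (take p xs). a \<noteq> x" by (auto dest: in_set_takeD)
  then show ?thesis by (simp add: insert_at_def takeWhile_append2)
qed

lemma insert_at_Suc_swap:
  assumes "p < length xs"
  shows "insert_at (Suc p) x xs
           = (insert_at p x xs)[p := insert_at p x xs ! Suc p, Suc p := insert_at p x xs ! p]"
proof -
  have "take (Suc p) xs = take p xs @ [xs ! p]" "drop p xs = xs ! p # drop (Suc p) xs"
    using assms by (simp_all add: take_Suc_conv_app_nth Cons_nth_drop_Suc)
  moreover have "length (take p xs) = p" using assms by simp
  ultimately show ?thesis unfolding insert_at_def by (simp add: list_update_append nth_append)
qed

lemma remove1_preimage_eq_insert_at:
  assumes "distinct v" "x \<notin> set v"
  shows "{w. distinct w \<and> x \<in> set w \<and> remove1 x w = v} = (\<lambda>p. insert_at p x v) ` {..length v}"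
proof (intro equalityI subsetI)
  fix w assume "w \<in> {w. distinct w \<and> x \<in> set w \<and> remove1 x w = v}"
  then have w: "x \<in> set w" "remove1 x w = v" by auto
  obtain ys zs where "w = ys @ x # zs" "x \<notin> set ys" using split_list_first[OF w(1)] by blast
  moreover from this have "v = ys @ zs" using w(2) by (simp add: remove1_append)
  ultimately show "w \<in> (\<lambda>p. insert_at p x v) ` {..length v}"
    by (intro image_eqI[of _ _ "length ys"]) (auto simp: insert_at_def)
qed (use assms in \<open>auto simp: remove1_insert_at\<close>)

lemma descents_Nil [simp]: "descents [] = 0"
  by (simp add: descents_def)

lemma descents_Cons:
  "descents (a # xs) = of_bool (xs \<noteq> [] \<and> hd xs < a) + descents xs"
proof -
  have "{t. Suc t < length (a # xs) \<and> (a # xs) ! Suc t < (a # xs) ! t}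
      = (if xs \<noteq> [] \<and> hd xs < a then {0} else {}) \<union> Suc ` {t. Suc t < length xs \<and> xs ! Suc t < xs ! t}"
    (is "?L = ?R")
  proof (rule set_eqI)
    fix t show "t \<in> ?L \<longleftrightarrow> t \<in> ?R"
      by (cases t) (auto simp: hd_conv_nth)
  qed
  moreover have "finite {t. Suc t < length xs \<and> xs ! Suc t < xs ! t}"
    by (rule finite_subset[of _ "{..<length xs}"]) auto
  ultimately show ?thesis by (simp add: descents_def card_image)
qed

lemma descents_append:
  "descents (xs @ ys) = descents xs + descents ys + of_bool (xs \<noteq> [] \<and> ys \<noteq> [] \<and> hd ys < last xs)"
  by (induction xs) (auto simp: descents_Cons)

lemma descents_le_length: "descents xs \<le> length xs - 1"
proof -
  have "{t. Suc t < length xs \<and> xs ! Suc t < xs ! t} \<subseteq> {..<length xs - 1}" by auto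
  then show ?thesis unfolding descents_def by (metis card_lessThan card_mono finite_lessThan)
qed

lemma descents_map_strict_mono_on:
  assumes "strict_mono_on (set xs) f"
  shows "descents (map f xs) = descents xs"
proof -
  have "f (xs ! Suc t) < f (xs ! t) \<longleftrightarrow> xs ! Suc t < xs ! t" if "Suc t < length xs" for t
    using that by (intro strict_mono_on_less[OF assms]) auto
  then show ?thesis unfolding descents_def by (auto intro!: arg_cong[where f = card])
qed

lemma descents_insert_at:
  "descents (insert_at p x xs)
     + of_bool (take p xs \<noteq> [] \<and> drop p xs \<noteq> [] \<and> hd (drop p xs) < last (take p xs))
   = descents xs + of_bool (take p xs \<noteq> [] \<and> x < last (take p xs))
       + of_bool (drop p xs \<noteq> [] \<and> hd (drop p xs) < x)"
  using descents_append[of "take p xs" "drop p xs"]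
  by (simp add: insert_at_def descents_append descents_Cons)

lemma sum_neighbours_compared_eq_length:
  fixes xs :: "'a :: linorder list"
  assumes "x \<notin> set xs"
  shows "(\<Sum>p\<le>length xs. of_bool (take p xs \<noteq> [] \<and> x < last (take p xs))
            + of_bool (drop p xs \<noteq> [] \<and> hd (drop p xs) < x) :: nat) = length xs"
proof -
  have "(\<Sum>p\<le>length xs. of_bool (take p xs \<noteq> [] \<and> x < last (take p xs)) :: nat)
      = (\<Sum>q<length xs. of_bool (x < xs ! q))"
    unfolding sum.atMost_shift by (auto intro!: sum.cong simp: take_Suc_conv_app_nth)
  moreover have "(\<Sum>p\<le>length xs. of_bool (drop p xs \<noteq> [] \<and> hd (drop p xs) < x) :: nat)
      = (\<Sum>q<length xs. of_bool (xs ! q < x))"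
    unfolding lessThan_Suc_atMost[symmetric] sum.lessThan_Suc
    by (auto intro!: sum.cong simp: hd_drop_conv_nth)
  moreover have "(\<Sum>q<length xs. of_bool (x < xs ! q) + of_bool (xs ! q < x) :: nat) = (\<Sum>q<length xs. 1)"
  proof (rule sum.cong)
    fix q assume "q \<in> {..<length xs}"
    then have "xs ! q \<noteq> x" using assms nth_mem by fastforce
    then show "of_bool (x < xs ! q) + of_bool (xs ! q < x) = (1 :: nat)" by auto
  qed simp
  ultimately show ?thesis by (simp add: sum.distrib)
qed

lemma sum_gap_descents_eq_descents:
  "(\<Sum>p\<le>length xs.
      of_bool (take p xs \<noteq> [] \<and> drop p xs \<noteq> [] \<and> hd (drop p xs) < last (take p xs)) :: nat)
     = descents xs"
proof -
  have "(\<Sum>p\<le>length xs. of_bool (take p xs \<noteq> [] \<and> drop p xs \<noteq> [] \<and> hd (drop p xs) < last (take p xs)))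
      = (\<Sum>t<length xs. of_bool (Suc t < length xs \<and> xs ! Suc t < xs ! t) :: nat)"
  proof -
    have "take (Suc t) xs \<noteq> [] \<and> drop (Suc t) xs \<noteq> [] \<and> hd (drop (Suc t) xs) < last (take (Suc t) xs)
        \<longleftrightarrow> Suc t < length xs \<and> xs ! Suc t < xs ! t" if "t < length xs" for t
      using that by (auto simp: take_Suc_conv_app_nth hd_drop_conv_nth)
    then show ?thesis unfolding sum.atMost_shift by (auto intro!: sum.cong)
  qed
  also have "\<dots> = card {t\<in>{..<length xs}. Suc t < length xs \<and> xs ! Suc t < xs ! t}"
    by (simp add: sum.If_cases Int_def)
  also have "{t\<in>{..<length xs}. Suc t < length xs \<and> xs ! Suc t < xs ! t}
      = {t. Suc t < length xs \<and> xs ! Suc t < xs ! t}"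
    by auto
  finally show ?thesis by (simp add: descents_def)
qed

lemma of_bool_descent_split_bounds:
  fixes a b x :: "'a :: linorder"
  assumes "a \<noteq> x" "b \<noteq> x"
  shows "(of_bool (b < a) :: nat) \<le> of_bool (x < a) + of_bool (b < x)"
    and "(of_bool (x < a) + of_bool (b < x) :: nat) \<le> of_bool (b < a) + 1"
  using assms by (cases "x < a"; cases "b < x"; auto)+

lemma descents_insert_at_increments:
  assumes "x \<notin> set xs"
  obtains e where "\<And>p. descents (insert_at p x xs) = descents xs + e p" "\<And>p. e p \<le> 1"
    "(\<Sum>p\<le>length xs. e p) = length xs - descents xs"
proof -
  define left where "left p = (of_bool (take p xs \<noteq> [] \<and> x < last (take p xs)) :: nat)" for p
  define right where "right p = (of_bool (drop p xs \<noteq> [] \<and> hd (drop p xs) < x) :: nat)" for p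
  define gap where
    "gap p = (of_bool (take p xs \<noteq> [] \<and> drop p xs \<noteq> [] \<and> hd (drop p xs) < last (take p xs)) :: nat)"
    for p
  have last_neq: "last (take p xs) \<noteq> x" if "take p xs \<noteq> []" for p
    using assms that by (metis last_in_set in_set_takeD)
  have hd_neq: "hd (drop p xs) \<noteq> x" if "drop p xs \<noteq> []" for p
    using assms that by (metis hd_in_set in_set_dropD)
  have bounds: "gap p \<le> left p + right p \<and> left p + right p \<le> gap p + 1" for p
  proof (cases "take p xs = [] \<or> drop p xs = []")
    case True
    then show ?thesis unfolding left_def right_def gap_def by auto
  next
    case False
    then show ?thesis
      using of_bool_descent_split_bounds[OF last_neq hd_neq, of p p] unfolding left_def right_def gap_def
      by simp
  qed
  have change: "descents (insert_at p x xs) + gap p = descents xs + left p + right p" for p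
    unfolding left_def right_def gap_def by (rule descents_insert_at)
  show ?thesis
  proof
    show "descents (insert_at p x xs) = descents xs + (left p + right p - gap p)" for p
      using change[of p] bounds[of p] by linarith
    show "left p + right p - gap p \<le> 1" for p
      using bounds[of p] by linarith
    have "(\<Sum>p\<le>length xs. left p + right p) = length xs"
      unfolding left_def right_def by (rule sum_neighbours_compared_eq_length[OF assms])
    moreover have "(\<Sum>p\<le>length xs. gap p) = descents xs"
      unfolding gap_def by (rule sum_gap_descents_eq_descents)
    moreover have "(\<Sum>p\<le>length xs. left p + right p - gap p)
        = (\<Sum>p\<le>length xs. left p + right p) - (\<Sum>p\<le>length xs. gap p)"
      using bounds by (intro sum_subtractf_nat) auto
    ultimately show "(\<Sum>p\<le>length xs. left p + right p - gap p) = length xs - descents xs"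
      by simp
  qed
qed

lemma sum_choose_unit_decrements:
  fixes e :: "nat \<Rightarrow> nat"
  assumes "\<And>p. p \<le> m \<Longrightarrow> e p \<le> 1"
  shows "(\<Sum>p\<le>m. (Suc a - e p) choose Suc m) + (\<Sum>p\<le>m. e p) * (a choose m) = Suc a * (a choose m)"
proof -
  have "((Suc a - e p) choose Suc m) + e p * (a choose m) = Suc a choose Suc m" if "p \<le> m" for p
    using assms[OF that] by (cases "e p") auto
  then have "(\<Sum>p\<le>m. ((Suc a - e p) choose Suc m) + e p * (a choose m))
      = (\<Sum>p\<le>m. Suc a choose Suc m)"
    by (intro sum.cong) auto
  also have "\<dots> = Suc m * (Suc a choose Suc m)" by simp
  also have "\<dots> = Suc a * (a choose m)" by (rule Suc_times_binomial)
  finally show ?thesis by (simp only: sum.distrib sum_distrib_right)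
qed

lemma sum_choose_descents_insert_at:
  assumes "x \<notin> set xs" "k \<ge> 1"
  shows "(\<Sum>p\<le>length xs. (length xs + k - descents (insert_at p x xs)) choose Suc (length xs))
       = k * ((length xs + k - 1 - descents xs) choose length xs)"
proof -
  define m where "m = length xs"
  define a where "a = m + k - 1 - descents xs"
  obtain e where des: "\<And>p. descents (insert_at p x xs) = descents xs + e p"
    and e1: "\<And>p. e p \<le> 1" and sum_e: "(\<Sum>p\<le>m. e p) = m - descents xs"
    using descents_insert_at_increments[OF assms(1)] unfolding m_def by metis
  have "descents xs \<le> m" using descents_le_length[of xs] unfolding m_def by linarith
  then have "m + k - descents (insert_at p x xs) = Suc a - e p" for p
    using assms(2) unfolding des a_def by linarith
  moreover have "Suc a = (m - descents xs) + k"
    using \<open>descents xs \<le> m\<close> assms(2) unfolding a_def by linarith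
  ultimately show ?thesis
    using sum_choose_unit_decrements[of m e a] e1 unfolding sum_e m_def[symmetric] a_def[symmetric]
    by (simp add: add_mult_distrib)
qed

lemma perm_words_length: "w \<in> perm_words r \<Longrightarrow> length w = r"
  unfolding perm_words_def by (metis (mono_tags) card_atLeastAtMost diff_Suc_1 distinct_card mem_Collect_eq)

lemma descents_perm_words_le: "w \<in> perm_words r \<Longrightarrow> descents w \<le> r - 1"
  using descents_le_length perm_words_length by metis

lemma perm_words_insert_at_iff: "insert_at p x v \<in> perm_words r \<longleftrightarrow> v @ [x] \<in> perm_words r"
  by (auto simp: perm_words_def)

lemma word_perm_permutes:
  assumes "w \<in> perm_words r"
  shows "word_perm w permutes {1..r}"
proof (rule bij_imp_permutes)
  have "bij_betw (\<lambda>x. x - 1) {1..r} {..<r}"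
    by (rule bij_betwI[where g = Suc]) auto
  moreover have "bij_betw ((!) w) {..<r} {1..r}"
    using assms perm_words_length[OF assms] by (intro bij_betw_nth) (auto simp: perm_words_def)
  ultimately have "bij_betw ((!) w \<circ> (\<lambda>x. x - 1)) {1..r} {1..r}"
    by (rule bij_betw_trans)
  moreover have "word_perm w x = ((!) w \<circ> (\<lambda>x. x - 1)) x" if "x \<in> {1..r}" for x
    using that perm_words_length[OF assms] by (auto simp: word_perm_def)
  ultimately show "bij_betw (word_perm w) {1..r} {1..r}"
    using bij_betw_cong by blast
next
  show "word_perm w x = x" if "x \<notin> {1..r}" for x
    using that perm_words_length[OF assms] by (auto simp: word_perm_def)
qed

lemma permutation_word_perm: "w \<in> perm_words r \<Longrightarrow> permutation (word_perm w)"
  using word_perm_permutes permutation_permutes by blast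

lemma word_perm_swap_positions:
  assumes "a < length w" "b < length w"
  shows "word_perm (w[a := w ! b, b := w ! a]) = word_perm w \<circ> transpose (Suc a) (Suc b)"
  using assms by (auto simp: fun_eq_iff word_perm_def transpose_def nth_list_update)

lemma word_sgn_swap_positions:
  assumes "w \<in> perm_words r" "a < length w" "b < length w" "a \<noteq> b"
  shows "word_sgn (w[a := w ! b, b := w ! a]) = - word_sgn w"
  using assms unfolding word_sgn_def word_perm_swap_positions[OF assms(2,3)]
  by (simp add: sign_compose permutation_word_perm permutation_swap_id sign_swap_id)

lemma word_perm_swap_letters:
  assumes "a \<in> {1..length w}" "b \<in> {1..length w}"
  shows "word_perm (map (transpose a b) w) = transpose a b \<circ> word_perm w"
  using assms by (auto simp: fun_eq_iff word_perm_def transpose_def)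

lemma word_sgn_swap_letters:
  assumes "w \<in> perm_words r" "a \<in> {1..r}" "b \<in> {1..r}" "a \<noteq> b"
  shows "word_sgn (map (transpose a b) w) = - word_sgn w"
  using assms perm_words_length[OF assms(1)] unfolding word_sgn_def
  by (simp add: word_perm_swap_letters sign_compose permutation_word_perm permutation_swap_id
      sign_swap_id)

lemma word_sgn_snoc_max: "length v = r \<Longrightarrow> word_sgn (v @ [Suc r]) = word_sgn v"
  unfolding word_sgn_def
  by (rule arg_cong[where f = sign]) (auto simp: fun_eq_iff word_perm_def nth_append)

lemma word_sgn_insert_at:
  assumes "v @ [x] \<in> perm_words r" "p \<le> length v"
  shows "word_sgn (insert_at p x v) = (-1) ^ (length v - p) * word_sgn (v @ [x])"
  using assms(2)
proof (induction "length v - p" arbitrary: p)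
  case 0
  then show ?case by (simp add: insert_at_def)
next
  case (Suc j)
  then have "p < length v" by simp
  have "word_sgn (insert_at (Suc p) x v) = - word_sgn (insert_at p x v)"
    unfolding insert_at_Suc_swap[OF \<open>p < length v\<close>]
    using assms(1) \<open>p < length v\<close>
    by (intro word_sgn_swap_positions[where r = r]) (simp_all add: perm_words_insert_at_iff)
  moreover have "length v - p = Suc (length v - Suc p)" using \<open>p < length v\<close> by simp
  ultimately show ?case using Suc by simp
qed

lemma perm_words_snocD:
  assumes "v @ [x] \<in> perm_words r"
  shows "x \<in> {1..r}" "x \<notin> set v" "set v = {1..r} - {x}"
proof -
  have "distinct (v @ [x])" and set_eq: "insert x (set v) = {1..r}"
    using assms by (simp_all add: perm_words_def)
  then show "x \<notin> set v" by simp
  show "x \<in> {1..r}" using set_eq by blast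
  show "set v = {1..r} - {x}" using set_eq \<open>x \<notin> set v\<close> by blast
qed

lemma map_transpose_in_perm_words:
  assumes "w \<in> perm_words r" "a \<in> {1..r}" "b \<in> {1..r}"
  shows "map (transpose a b) w \<in> perm_words r"
  using assms by (simp add: perm_words_def distinct_map)

lemma strict_mono_on_shift_letter: "strict_mono_on (- {i}) (shift_letter i)"
  by (intro strict_mono_onI) (auto simp: shift_letter_def)

lemma shift_letter_image:
  assumes "i \<in> {1..n}"
  shows "shift_letter i ` ({1..n} - {i}) = {1..n - 1}"
proof (intro equalityI subsetI)
  fix y assume y: "y \<in> {1..n - 1}"
  show "y \<in> shift_letter i ` ({1..n} - {i})"
  proof (cases "y < i")
    case True
    with y assms show ?thesis by (intro image_eqI[of _ _ y]) (auto simp: shift_letter_def)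
  next
    case False
    with y assms show ?thesis by (intro image_eqI[of _ _ "Suc y"]) (auto simp: shift_letter_def)
  qed
next
  fix y assume "y \<in> shift_letter i ` ({1..n} - {i})"
  then obtain x where "x \<in> {1..n}" "x \<noteq> i" "y = shift_letter i x" by blast
  with assms show "y \<in> {1..n - 1}" by (auto simp: shift_letter_def)
qed

lemma shift_letter_transpose:
  "x \<noteq> i \<Longrightarrow> shift_letter (Suc i) (transpose i (Suc i) x) = shift_letter i x"
  by (auto simp: shift_letter_def transpose_def)

lemma map_shift_letter_in_perm_words_iff:
  assumes "i \<in> {1..n}" "i \<notin> set v"
  shows "map (shift_letter i) v \<in> perm_words (n - 1) \<longleftrightarrow> v @ [i] \<in> perm_words n"
proof -
  have inj: "inj_on (shift_letter i) (- {i})"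
    by (rule strict_mono_on_imp_inj_on[OF strict_mono_on_shift_letter])
  have sub: "set v \<subseteq> - {i}" "{1..n} - {i} \<subseteq> - {i}" using assms(2) by blast+
  have "distinct (map (shift_letter i) v) \<longleftrightarrow> distinct v"
    using inj_on_subset[OF inj sub(1)] by (simp add: distinct_map)
  moreover have "shift_letter i ` set v = {1..n - 1} \<longleftrightarrow> set v = {1..n} - {i}"
    unfolding shift_letter_image[OF assms(1), symmetric] using inj_on_image_eq_iff[OF inj sub] .
  moreover have "set v = {1..n} - {i} \<longleftrightarrow> insert i (set v) = {1..n}"
    using insert_Diff[OF assms(1)] Diff_insert_absorb[OF assms(2)] by metis
  ultimately show ?thesis using assms(2) by (simp add: perm_words_def)
qed

lemma word_sgn_snoc_shift_letter:
  assumes "v @ [i] \<in> perm_words n"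
  shows "word_sgn (v @ [i]) = (-1) ^ (n - i) * word_sgn (map (shift_letter i) v @ [n])"
  using assms
proof (induction "n - i" arbitrary: i v)
  case 0
  then have "i = n" "set v = {1..n} - {n}"
    using perm_words_snocD[OF "0.prems"] by auto
  then have "map (shift_letter i) v = v"
    by (intro map_idI) (auto simp: shift_letter_def)
  then show ?case using \<open>i = n\<close> by simp
next
  case (Suc j)
  note i = perm_words_snocD[OF Suc.prems]
  have "i < n" using Suc.hyps(2) by linarith
  define \<tau> where "\<tau> = transpose i (Suc i)"
  have snoc: "map \<tau> (v @ [i]) = map \<tau> v @ [Suc i]" by (simp add: \<tau>_def)
  have "map \<tau> (v @ [i]) \<in> perm_words n"
    unfolding \<tau>_def using Suc.prems i(1) \<open>i < n\<close> by (intro map_transpose_in_perm_words) auto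
  then have perm: "map \<tau> v @ [Suc i] \<in> perm_words n" unfolding snoc .
  have "word_sgn (map \<tau> (v @ [i])) = - word_sgn (v @ [i])"
    unfolding \<tau>_def using Suc.prems i(1) \<open>i < n\<close> by (intro word_sgn_swap_letters) auto
  then have swap: "word_sgn (map \<tau> v @ [Suc i]) = - word_sgn (v @ [i])" unfolding snoc .
  have "shift_letter (Suc i) (\<tau> x) = shift_letter i x" if "x \<in> set v" for x
    unfolding \<tau>_def using that i(2) by (metis shift_letter_transpose)
  then have shift_eq: "map (shift_letter (Suc i)) (map \<tau> v) = map (shift_letter i) v"
    by (simp add: map_eq_conv)
  have "word_sgn (map \<tau> v @ [Suc i]) = (-1) ^ (n - Suc i) * word_sgn (map (shift_letter i) v @ [n])"
    using Suc.hyps(1)[of "Suc i" "map \<tau> v"] Suc.hyps(2) perm unfolding shift_eq by simp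
  moreover have "n - i = Suc (n - Suc i)" using \<open>i < n\<close> by simp
  ultimately show ?case using swap by simp
qed

lemma word_sgn_insert_at_shift_letter:
  assumes "v @ [i] \<in> perm_words n" "p \<le> length v"
  shows "(-1) ^ p * word_sgn (insert_at p i v) = (-1) ^ (i - 1) * word_sgn (map (shift_letter i) v)"
proof -
  have len: "Suc (length v) = n" using perm_words_length[OF assms(1)] by simp
  have i: "i \<in> {1..n}" using perm_words_snocD[OF assms(1)] by simp
  have "(-1) ^ p * word_sgn (insert_at p i v)
      = (-1) ^ (p + (length v - p) + (n - i)) * word_sgn (map (shift_letter i) v @ [Suc (length v)])"
    using word_sgn_insert_at[OF assms] word_sgn_snoc_shift_letter[OF assms(1)] len
    by (simp add: power_add)
  also have "p + (length v - p) + (n - i) = (i - 1) + 2 * (n - i)"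
    using assms(2) len i by auto
  finally show ?thesis by (simp add: power_add power_mult word_sgn_snoc_max)
qed

lemma lambda_elt_not_perm_words: "w \<notin> perm_words r \<Longrightarrow> lambda_elt r k w = 0"
  by (simp add: lambda_elt_def l_elt_def)

lemma lambda_elt_perm_words:
  assumes "w \<in> perm_words r" "k \<ge> 1"
  shows "lambda_elt r k w = (-1) ^ (k - 1) * of_int (word_sgn w) * of_nat ((r + k - 1 - descents w) choose r)"
proof -
  define d where "d = descents w"
  define s where "s = (of_int (word_sgn w) :: complex)"
  have "d \<le> r - 1" using descents_perm_words_le[OF assms(1)] unfolding d_def .
  have l_elt: "l_elt r (k - t) w = (if t = k - 1 - d \<and> d \<le> k - 1 then (-1) ^ d * s else 0)"
    if "t < k" for t
    using that assms(1) by (auto simp: l_elt_def d_def s_def)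
  show ?thesis
  proof (cases "d \<le> k - 1")
    case True
    have "lambda_elt r k w
        = (\<Sum>t<k. if t = k - 1 - d then (-1) ^ t * of_nat ((r + t) choose t) * ((-1) ^ d * s) else 0)"
      unfolding lambda_elt_def by (rule sum.cong) (use True in \<open>simp_all add: l_elt\<close>)
    also have "\<dots> = (-1) ^ (k - 1 - d) * ((-1) ^ d * s) * of_nat ((r + (k - 1 - d)) choose (k - 1 - d))"
      using True assms(2) by (simp add: sum.delta)
    also have "(r + (k - 1 - d)) choose (k - 1 - d) = (r + k - 1 - d) choose r"
      using binomial_symmetric[of "k - 1 - d" "r + (k - 1 - d)"] True assms(2) by simp
    also have "(-1) ^ (k - 1 - d) * ((-1) ^ d * s) = (-1) ^ (k - 1 - d + d) * s"
      by (simp add: power_add)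
    also have "k - 1 - d + d = k - 1"
      using True by simp
    finally show ?thesis unfolding s_def d_def .
  next
    case False
    then have "(r + k - 1 - d) choose r = 0"
      using \<open>d \<le> r - 1\<close> by (intro binomial_eq_0) linarith
    moreover have "lambda_elt r k w = 0"
      unfolding lambda_elt_def using False by (intro sum.neutral) (simp add: l_elt)
    ultimately show ?thesis unfolding d_def by simp
  qed
qed

lemma bd_letter_eq_sum_insert_at:
  assumes "distinct v" "i \<notin> set v"
  shows "bd_letter i f v = (\<Sum>p\<le>length v. (-1) ^ p * f (insert_at p i v))"
proof -
  have inj: "inj_on (\<lambda>p. insert_at p i v) {..length v}"
  proof (rule inj_onI)
    fix p q assume pq: "p \<in> {..length v}" "q \<in> {..length v}" and eq: "insert_at p i v = insert_at q i v"
    have "length (takeWhile (\<lambda>a. a \<noteq> i) (insert_at p i v))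
        = length (takeWhile (\<lambda>a. a \<noteq> i) (insert_at q i v))"
      using eq by simp
    then show "p = q"
      using pq by (simp add: takeWhile_insert_at[OF assms(2)] min_absorb1)
  qed
  show ?thesis
    unfolding bd_letter_def remove1_preimage_eq_insert_at[OF assms] sum.reindex[OF inj]
    by (intro sum.cong) (auto simp: takeWhile_insert_at[OF assms(2)])
qed

lemma bd_letter_eq_0:
  assumes "\<And>w. w \<notin> perm_words n \<Longrightarrow> f w = 0" "v @ [i] \<notin> perm_words n"
  shows "bd_letter i f v = 0"
  unfolding bd_letter_def
proof (intro sum.neutral ballI)
  fix w assume "w \<in> {w. distinct w \<and> i \<in> set w \<and> remove1 i w = v}"
  then have w: "distinct w" "i \<in> set w" "remove1 i w = v" by simp_all
  then have "distinct (v @ [i])" by auto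
  moreover have "set (v @ [i]) = set w"
    using w by auto
  ultimately have "w \<notin> perm_words n"
    using assms(2) w(1) by (simp add: perm_words_def)
  then show "(-1) ^ length (takeWhile (\<lambda>a. a \<noteq> i) w) * f w = 0"
    using assms(1) by simp
qed

lemma bd_letter_scale: "bd_letter i (\<lambda>w. c * f w) v = c * bd_letter i f v"
  by (simp add: bd_letter_def sum_distrib_left mult.left_commute)

lemma bd_letter_lambda_elt:
  assumes "i \<in> {1..n}" "k \<ge> 1"
  shows "bd_letter i (lambda_elt n k) v = (-1) ^ (i - 1) * of_nat k * relabel i (lambda_elt (n - 1) k) v"
proof (cases "v @ [i] \<in> perm_words n")
  case False
  then have "relabel i (lambda_elt (n - 1) k) v = 0"
    using map_shift_letter_in_perm_words_iff[OF assms(1)]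
    by (auto simp: relabel_def lambda_elt_not_perm_words)
  moreover have "bd_letter i (lambda_elt n k) v = 0"
    using False by (intro bd_letter_eq_0[where n = n]) (simp_all add: lambda_elt_not_perm_words)
  ultimately show ?thesis by simp
next
  case True
  note v = perm_words_snocD[OF True]
  define v' where "v' = map (shift_letter i) v"
  define s where "s = (of_int (word_sgn v') :: complex)"
  define m where "m = length v"
  have n: "n = Suc m" using perm_words_length[OF True] unfolding m_def by simp
  have "distinct v" using True by (simp add: perm_words_def)
  have "(-1) ^ p * lambda_elt n k (insert_at p i v)
      = (-1) ^ (k - 1) * (-1) ^ (i - 1) * s * of_nat ((m + k - descents (insert_at p i v)) choose n)"
    if "p \<le> m" for p
  proof -
    have "insert_at p i v \<in> perm_words n" using True by (simp add: perm_words_insert_at_iff)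
    moreover have "(-1) ^ p * (of_int (word_sgn (insert_at p i v)) :: complex) = (-1) ^ (i - 1) * s"
      using arg_cong[OF word_sgn_insert_at_shift_letter[OF True, of p], of of_int] that
      unfolding s_def v'_def m_def by simp
    ultimately show ?thesis
      using assms(2) unfolding n by (simp add: lambda_elt_perm_words algebra_simps)
  qed
  then have "bd_letter i (lambda_elt n k) v
      = (-1) ^ (k - 1) * (-1) ^ (i - 1) * s * of_nat (\<Sum>p\<le>m. (m + k - descents (insert_at p i v)) choose n)"
    unfolding bd_letter_eq_sum_insert_at[OF \<open>distinct v\<close> v(2)] m_def[symmetric]
    by (simp add: sum_distrib_left)
  also have "(\<Sum>p\<le>m. (m + k - descents (insert_at p i v)) choose n)
      = k * ((m + k - 1 - descents v) choose m)"
    using sum_choose_descents_insert_at[OF v(2) assms(2)] unfolding n m_def .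
  also have "descents v = descents v'"
    unfolding v'_def using v(2)
    by (intro descents_map_strict_mono_on[symmetric] monotone_on_subset[OF strict_mono_on_shift_letter])
      auto
  also have "relabel i (lambda_elt (n - 1) k) v = (-1) ^ (k - 1) * s * of_nat ((m + k - 1 - descents v') choose m)"
    using map_shift_letter_in_perm_words_iff[OF assms(1) v(2)] True assms(2)
    unfolding relabel_def v'_def s_def n by (simp add: lambda_elt_perm_words v(2))
  ultimately show ?thesis by (simp add: algebra_simps)
qed

definition shifted_binomial_poly :: "nat \<Rightarrow> nat \<Rightarrow> 'a :: field_char_0 poly" where
  "shifted_binomial_poly c r = smult (1 / fact r) (\<Prod>m<r. [:of_nat c - of_nat m, 1:])"

lemma poly_shifted_binomial_poly: "poly (shifted_binomial_poly c r) x = (x + of_nat c) gchoose r"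
  by (simp add: shifted_binomial_poly_def poly_prod gbinomial_prod_rev atLeast0LessThan algebra_simps)

lemma poly_shifted_binomial_poly_of_nat:
  "poly (shifted_binomial_poly c r) (of_nat k :: 'a :: field_char_0) = of_nat ((k + c) choose r)"
  by (simp add: poly_shifted_binomial_poly binomial_gbinomial)

lemma degree_shifted_binomial_poly: "degree (shifted_binomial_poly c r) \<le> r"
proof -
  have "degree (\<Prod>m<r. [:of_nat c - of_nat m, 1:] :: 'a poly) \<le> (\<Sum>m<r. degree [:of_nat c - of_nat m, 1 :: 'a:])"
    using degree_prod_sum_le[of "{..<r}" "\<lambda>m. [:of_nat c - of_nat m, 1 :: 'a:]"] by (simp add: comp_def)
  also have "\<dots> = r" by simp
  finally show ?thesis
    unfolding shifted_binomial_poly_def using degree_smult_le order_trans by blast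
qed

definition lambda_poly :: "nat \<Rightarrow> nat list \<Rightarrow> complex poly" where
  "lambda_poly r w = (if w \<in> perm_words r
     then smult (of_int (word_sgn w)) (shifted_binomial_poly (r - 1 - descents w) r) else 0)"

lemma poly_lambda_poly:
  assumes "r \<ge> 1" "k \<ge> 1"
  shows "poly (lambda_poly r w) (of_nat k) = (-1) ^ (k - 1) * lambda_elt r k w"
proof (cases "w \<in> perm_words r")
  case True
  have "k + (r - 1 - descents w) = r + k - 1 - descents w"
    using descents_perm_words_le[OF True] assms by simp
  moreover have "(-1) ^ (k - 1) * (-1) ^ (k - 1) = (1 :: complex)"
    by (simp flip: power_add)
  ultimately show ?thesis
    using True assms(2)
    by (simp add: lambda_poly_def poly_shifted_binomial_poly_of_nat lambda_elt_perm_words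
        mult.assoc[symmetric])
qed (simp add: lambda_poly_def lambda_elt_not_perm_words)

lemma degree_lambda_poly: "degree (lambda_poly r w) \<le> r"
  unfolding lambda_poly_def using degree_smult_le degree_shifted_binomial_poly order_trans by auto

lemma coeff_0_lambda_poly:
  assumes "r \<ge> 1"
  shows "coeff (lambda_poly r w) 0 = 0"
proof (cases "w \<in> perm_words r")
  case True
  have "poly (shifted_binomial_poly (r - 1 - descents w) r) (0 :: complex) = 0"
    using poly_shifted_binomial_poly_of_nat[of "r - 1 - descents w" r 0] assms
      descents_perm_words_le[OF True] by (simp add: binomial_eq_0)
  then show ?thesis using True by (simp add: lambda_poly_def poly_0_coeff_0[symmetric])
qed (simp add: lambda_poly_def)

lemma poly_eq_sum_coeff_pow:
  fixes p :: "'a :: comm_semiring_1 poly"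
  assumes "degree p \<le> r" "coeff p 0 = 0"
  shows "poly p x = (\<Sum>j=1..r. x ^ j * coeff p j)"
proof -
  have "poly p x = poly (\<Sum>j\<le>r. monom (coeff p j) j) x"
    by (simp add: poly_as_sum_of_monoms'[OF assms(1)])
  also have "\<dots> = (\<Sum>j\<le>r. x ^ j * coeff p j)"
    by (simp add: poly_sum poly_monom mult.commute)
  also have "{..r} = insert 0 {1..r}" by auto
  finally show ?thesis using assms(2) by simp
qed

lemma vandermonde_unique:
  fixes c d :: "nat \<Rightarrow> 'a :: {idom, ring_char_0}"
  assumes "\<And>k. k \<in> {1..r} \<Longrightarrow> (\<Sum>j=1..r. of_nat k ^ j * c j) = (\<Sum>j=1..r. of_nat k ^ j * d j)"
    and "j \<in> {1..r}"
  shows "c j = d j"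
proof -
  define P where "P c = (\<Sum>j=1..r. monom (c j) j)" for c :: "nat \<Rightarrow> 'a"
  have poly_P: "poly (P c) x = (\<Sum>j=1..r. x ^ j * c j)" for c x
    by (simp add: P_def poly_sum poly_monom mult.commute)
  have degree_P: "degree (P c) < card (of_nat ` {0..r} :: 'a set)" for c
  proof -
    have "degree (P c) \<le> r"
      unfolding P_def by (intro degree_sum_le) (auto intro: order_trans[OF degree_monom_le])
    moreover have "card (of_nat ` {0..r} :: 'a set) = Suc r"
      by (simp add: card_image inj_on_def)
    ultimately show ?thesis by simp
  qed
  have "P c = P d"
  proof (rule poly_eqI_degree[OF _ degree_P degree_P])
    fix x :: 'a assume "x \<in> of_nat ` {0..r}"
    then obtain k where "k \<le> r" "x = of_nat k" by auto
    then show "poly (P c) x = poly (P d) x"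
      using assms(1)[of k] by (cases "k = 0") (simp_all add: poly_P power_0_left)
  qed
  then have "coeff (P c) j = coeff (P d) j" by simp
  then show ?thesis using assms(2) by (simp add: P_def coeff_sum)
qed

text \<open>The defining system starts at \<open>j = 1\<close>; for \<open>r \<ge> 1\<close> the constant term of
  \<open>lambda_poly\<close> vanishes, so its coefficients solve it.\<close>
lemma euler_idem_eq_coeff_lambda_poly:
  assumes "r \<ge> 1"
  shows "euler_idem r j = (\<lambda>w. coeff (lambda_poly r w) j)"
proof -
  define E where "E j w = coeff (lambda_poly r w) j" for j w
  have E_outside: "E j = (\<lambda>_. 0)" if "j \<notin> {1..r}" for j
  proof (cases "j = 0")
    case False
    then have "r < j" using that by auto
    then show ?thesis
      by (auto simp: E_def fun_eq_iff intro!: coeff_eq_0 le_less_trans[OF degree_lambda_poly])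
  qed (simp add: E_def fun_eq_iff coeff_0_lambda_poly[OF assms])
  have E_solves: "(-1) ^ (k - 1) * lambda_elt r k w = (\<Sum>j=1..r. of_nat k ^ j * E j w)"
    if "k \<in> {1..r}" for k w
    using poly_lambda_poly[OF assms, of k w] that
      poly_eq_sum_coeff_pow[OF degree_lambda_poly coeff_0_lambda_poly[OF assms]]
    by (simp add: E_def)
  have "euler_idem r = E"
    unfolding euler_idem_def
  proof (rule the_equality)
    fix e assume e: "(\<forall>j. j \<notin> {1..r} \<longrightarrow> e j = (\<lambda>_. 0)) \<and>
      (\<forall>k\<in>{1..r}. \<forall>w. (-1) ^ (k - 1) * lambda_elt r k w = (\<Sum>j=1..r. of_nat k ^ j * e j w))"
    show "e = E"
    proof (intro ext)
      fix j w
      show "e j w = E j w"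
      proof (cases "j \<in> {1..r}")
        case True
        show ?thesis
          by (rule vandermonde_unique[where c = "\<lambda>j. e j w", OF _ True]) (use e E_solves in simp)
      qed (use e E_outside in simp)
    qed
  qed (use E_outside E_solves in blast)
  then show ?thesis by (simp add: E_def fun_eq_iff)
qed

definition bd_letter_poly :: "nat \<Rightarrow> (nat list \<Rightarrow> complex poly) \<Rightarrow> nat list \<Rightarrow> complex poly" where
  "bd_letter_poly i P v = (\<Sum>w\<in>{w. distinct w \<and> i \<in> set w \<and> remove1 i w = v}.
     smult ((-1) ^ length (takeWhile (\<lambda>a. a \<noteq> i) w)) (P w))"

lemma coeff_bd_letter_poly: "coeff (bd_letter_poly i P v) j = bd_letter i (\<lambda>w. coeff (P w) j) v"
  by (simp add: bd_letter_poly_def bd_letter_def coeff_sum)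

lemma poly_bd_letter_poly: "poly (bd_letter_poly i P v) x = bd_letter i (\<lambda>w. poly (P w) x) v"
  by (simp add: bd_letter_poly_def bd_letter_def poly_sum)

lemma degree_bd_letter_poly:
  assumes "\<And>w. degree (P w) \<le> r"
  shows "degree (bd_letter_poly i P v) \<le> r"
proof (cases "finite {w. distinct w \<and> i \<in> set w \<and> remove1 i w = v}")
  case True
  then show ?thesis
    unfolding bd_letter_poly_def
    by (intro degree_sum_le) (auto intro!: order_trans[OF degree_smult_le] assms)
qed (simp add: bd_letter_poly_def)

lemma bd_letter_poly_lambda_poly:
  fixes v :: "nat list"
  assumes "i \<in> {1..n}" "n \<ge> 2"
  defines "R \<equiv> if i \<in> set v then 0 else lambda_poly (n - 1) (map (shift_letter i) v)"
  shows "bd_letter_poly i (lambda_poly n) v = pCons 0 (smult ((-1) ^ (i - 1)) R)"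
proof (rule poly_eqI_degree[of "of_nat ` {1..Suc n}"])
  fix x :: complex assume "x \<in> of_nat ` {1..Suc n}"
  then obtain k where "k \<ge> 1" "x = of_nat k" by auto
  have "poly (bd_letter_poly i (lambda_poly n) v) x = (-1) ^ (k - 1) * bd_letter i (lambda_elt n k) v"
    using assms(2) \<open>k \<ge> 1\<close>
    by (simp add: \<open>x = of_nat k\<close> poly_bd_letter_poly poly_lambda_poly bd_letter_scale)
  also have "\<dots> = x * (-1) ^ (i - 1) * ((-1) ^ (k - 1) * relabel i (lambda_elt (n - 1) k) v)"
    using bd_letter_lambda_elt[OF assms(1) \<open>k \<ge> 1\<close>] by (simp add: \<open>x = of_nat k\<close> algebra_simps)
  also have "(-1) ^ (k - 1) * relabel i (lambda_elt (n - 1) k) v = poly R x"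
    using assms(2) \<open>k \<ge> 1\<close> by (simp add: R_def relabel_def \<open>x = of_nat k\<close> poly_lambda_poly)
  finally show "poly (bd_letter_poly i (lambda_poly n) v) x = poly (pCons 0 (smult ((-1) ^ (i - 1)) R)) x"
    by simp
next
  have "card (of_nat ` {1..Suc n} :: complex set) = Suc n"
    by (simp add: card_image inj_on_def)
  moreover have "degree (bd_letter_poly i (lambda_poly n) v) \<le> n"
    by (intro degree_bd_letter_poly degree_lambda_poly)
  moreover have "degree R \<le> n - 1"
    unfolding R_def using degree_lambda_poly by simp
  then have "degree (pCons 0 (smult ((-1) ^ (i - 1)) R)) \<le> n"
    using assms(2) by (cases "R = 0") auto
  ultimately show "degree (bd_letter_poly i (lambda_poly n) v) < card (of_nat ` {1..Suc n} :: complex set)"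
    and "degree (pCons 0 (smult ((-1) ^ (i - 1)) R)) < card (of_nat ` {1..Suc n} :: complex set)"
    by simp_all
qed

lemma bd_letter_euler_idem:
  assumes "i \<in> {1..n}" "n \<ge> 2"
  shows "bd_letter i (euler_idem n k) v = (-1) ^ (i - 1) * relabel i (euler_idem (n - 1) (k - 1)) v"
proof -
  define R where "R = (if i \<in> set v then 0 else lambda_poly (n - 1) (map (shift_letter i) v))"
  have "coeff R 0 = 0"
    using assms(2) by (simp add: R_def coeff_0_lambda_poly)
  have "n \<ge> 1" "n - 1 \<ge> 1" using assms(2) by simp_all
  have "bd_letter i (euler_idem n k) v = coeff (bd_letter_poly i (lambda_poly n) v) k"
    by (simp add: coeff_bd_letter_poly euler_idem_eq_coeff_lambda_poly[OF \<open>n \<ge> 1\<close>])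
  also have "\<dots> = (-1) ^ (i - 1) * coeff R (k - 1)"
    unfolding bd_letter_poly_lambda_poly[OF assms] R_def[symmetric]
    using \<open>coeff R 0 = 0\<close> by (cases k) simp_all
  also have "coeff R (k - 1) = relabel i (euler_idem (n - 1) (k - 1)) v"
    unfolding euler_idem_eq_coeff_lambda_poly[OF \<open>n - 1 \<ge> 1\<close>] by (simp add: R_def relabel_def)
  finally show ?thesis .
qed

theorem theorem2p1:
  fixes n i :: nat
  assumes "n \<ge> 2" and "i \<in> {1..n}"
  shows "(\<forall>k\<ge>1. bd_letter i (lambda_elt n k)
            = (\<lambda>v. (-1) ^ (i - 1) * of_nat k * relabel i (lambda_elt (n - 1) k) v))
       \<and> (\<forall>k\<in>{1..n}. bd_letter i (euler_idem n k)
            = (\<lambda>v. (-1) ^ (i - 1) * relabel i (euler_idem (n - 1) (k - 1)) v))"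
  using bd_letter_lambda_elt[OF assms(2)] bd_letter_euler_idem[OF assms(2,1)] by auto

end
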